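(* Let $G$ act by homeomorphisms on a Hausdorff space $M$. For any finite subset $F\subset G$ and any finitary point coders $\mathcal{Q},\mathcal{Q}'$ for this action, there is $N\in\mathbb{N}$ such that the following holds. Let $(g_0,\mathbf c)$ be a generalized $\mathcal{Q}'$-coding of a point $p\in M$ with path sequence $(g_k)_{k\ge0}$ and terminal vertex sequence $(z_k)_{k\ge1}$, and let $(h_0,\mathbf d)$ be a generalized $\mathcal{Q}$-coding of the same point $p$ with path sequence $(h_k)_{k\ge0}$ and terminal vertex sequence $(y_k)_{k\ge1}$. Then for all $m,n\in\mathbb{N}$ with $g_n^{-1}h_m\in F$, \[g_{n+N}\,\overline{W(z_{n+N})}\subset h_mW(y_m).\]
   Context: A finitary point coder $\mathcal{Q}$ for an action of a group $G$ by homeomorphisms on a Hausdorff space $M$ consists of a finite collection of open subsets of $M$, a finite subset $F(\mathcal{Q})\subset G$, and a finite directed graph whose vertices $v$ are labeled by open sets $W(v)$ from that collection and whose edges $e$ are labeled by elements $\mathrm{Lab}(e)\in F(\mathcal{Q})$, such that: (a) whenever there is an edge from $z_1$ to $z_2$ labeled $\alpha$, $\alpha\overline{W(z_2)}\subset W(z_1)$; (b) for every infinite edge path $\mathbf e=(e_k)_{k\ge1}$ with $z_k=\tau(e_k)$ (terminal vertex of $e_k$) and $\alpha_k=\mathrm{Lab}(e_k)$, the sets $\alpha_1\cdots\alpha_nW(z_n)$, $n\in\mathbb{N}$, form a neighborhood basis of some point $p\in M$; such a path is called a strict $\mathcal{Q}$-coding of $p$. A generalized $\mathcal{Q}$-coding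 is a pair $(g_0,\mathbf e)$ with $g_0\in G$ and $\mathbf e$ a strict $\mathcal{Q}$-coding; if $\mathbf e$ codes $p$, then $(g_0,\mathbf e)$ codes $g_0p$. Its terminal vertex sequence is that of $\mathbf e$, and its path sequence is $g_k:=g_0\alpha_1\cdots\alpha_k$, $k\ge0$. *)

theory Defs
  imports "HOL-Analysis.Analysis" "HOL-Algebra.Group"
begin

definition homeo_action :: "('g, 'b) monoid_scheme \<Rightarrow> ('g \<Rightarrow> 'm::t2_space \<Rightarrow> 'm) \<Rightarrow> bool" where
  "homeo_action G act \<longleftrightarrow>
     group G \<and>
     act \<one>\<^bsub>G\<^esub> = id \<and>
     (\<forall>g\<in>carrier G. \<forall>h\<in>carrier G. act (g \<otimes>\<^bsub>G\<^esub> h) = act g \<circ> act h) \<and>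
     (\<forall>g\<in>carrier G. homeomorphism UNIV UNIV (act g) (act (inv\<^bsub>G\<^esub> g)))"

definition esrc :: "'v \<times> 'g \<times> 'v \<Rightarrow> 'v" where "esrc e = fst e"
definition elab :: "'v \<times> 'g \<times> 'v \<Rightarrow> 'g" where "elab e = fst (snd e)"
definition etgt :: "'v \<times> 'g \<times> 'v \<Rightarrow> 'v" where "etgt e = snd (snd e)"

text \<open>Infinite edge path: e k is the edge e_(k+1) of the paper.\<close>
definition edge_path :: "('v \<times> 'g \<times> 'v) set \<Rightarrow> (nat \<Rightarrow> 'v \<times> 'g \<times> 'v) \<Rightarrow> bool" where
  "edge_path E e \<longleftrightarrow> (\<forall>k. e k \<in> E) \<and> (\<forall>k. etgt (e k) = esrc (e (Suc k)))"

fun labprod :: "('g, 'b) monoid_scheme \<Rightarrow> (nat \<Rightarrow> 'v \<times> 'g \<times> 'v) \<Rightarrow> nat \<Rightarrow> 'g" where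
  "labprod G e 0 = \<one>\<^bsub>G\<^esub>"
| "labprod G e (Suc n) = labprod G e n \<otimes>\<^bsub>G\<^esub> elab (e n)"

text \<open>Terminal vertex z_n = terminal vertex of e_n (meaningful for n >= 1).\<close>
definition tvert :: "(nat \<Rightarrow> 'v \<times> 'g \<times> 'v) \<Rightarrow> nat \<Rightarrow> 'v" where
  "tvert e n = etgt (e (n - 1))"

definition pathseq :: "('g, 'b) monoid_scheme \<Rightarrow> 'g \<Rightarrow> (nat \<Rightarrow> 'v \<times> 'g \<times> 'v) \<Rightarrow> nat \<Rightarrow> 'g" where
  "pathseq G g0 e k = g0 \<otimes>\<^bsub>G\<^esub> labprod G e k"

definition nbhd_basis :: "'m::topological_space \<Rightarrow> (nat \<Rightarrow> 'm set) \<Rightarrow> bool" where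
  "nbhd_basis p B \<longleftrightarrow>
     (\<forall>n\<ge>1. p \<in> interior (B n)) \<and>
     (\<forall>U. open U \<and> p \<in> U \<longrightarrow> (\<exists>n\<ge>1. B n \<subseteq> U))"

definition point_coder ::
  "('g, 'b) monoid_scheme \<Rightarrow> ('g \<Rightarrow> 'm::t2_space \<Rightarrow> 'm) \<Rightarrow> 'v set \<Rightarrow> ('v \<times> 'g \<times> 'v) set \<Rightarrow> ('v \<Rightarrow> 'm set) \<Rightarrow> bool" where
  "point_coder G act V E W \<longleftrightarrow>
     finite V \<and> finite E \<and> E \<subseteq> V \<times> carrier G \<times> V \<and>
     (\<forall>v\<in>V. open (W v)) \<and>
     (\<forall>e\<in>E. act (elab e) ` closure (W (etgt e)) \<subseteq> W (esrc e)) \<and>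
     (\<forall>e. edge_path E e \<longrightarrow>
        (\<exists>p. nbhd_basis p (\<lambda>n. act (labprod G e n) ` W (tvert e n))))"

definition strict_coding ::
  "('g, 'b) monoid_scheme \<Rightarrow> ('g \<Rightarrow> 'm::t2_space \<Rightarrow> 'm) \<Rightarrow> ('v \<times> 'g \<times> 'v) set \<Rightarrow> ('v \<Rightarrow> 'm set)
   \<Rightarrow> (nat \<Rightarrow> 'v \<times> 'g \<times> 'v) \<Rightarrow> 'm \<Rightarrow> bool" where
  "strict_coding G act E W e p \<longleftrightarrow>
     edge_path E e \<and> nbhd_basis p (\<lambda>n. act (labprod G e n) ` W (tvert e n))"

definition gen_coding ::
  "('g, 'b) monoid_scheme \<Rightarrow> ('g \<Rightarrow> 'm::t2_space \<Rightarrow> 'm) \<Rightarrow> ('v \<times> 'g \<times> 'v) set \<Rightarrow> ('v \<Rightarrow> 'm set)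
   \<Rightarrow> 'g \<Rightarrow> (nat \<Rightarrow> 'v \<times> 'g \<times> 'v) \<Rightarrow> 'm \<Rightarrow> bool" where
  "gen_coding G act E W g0 e q \<longleftrightarrow>
     g0 \<in> carrier G \<and> (\<exists>p. strict_coding G act E W e p \<and> q = act g0 p)"

end

theory Submission
  imports Defs
begin

(* If g_n^-1 h_m = f, the tail of c after n codes a point q and the tail of d after m codes a
   point r with q = f r; r lies in \<alpha> cl W(\<tau> \<epsilon>) for the first edge \<epsilon> = d_m of its tail, a
   closed set inside the open set W(\<sigma> \<epsilon>) = W(y_m). It therefore suffices that, for each of the
   finitely many pairs (f, \<epsilon>), every Q'-coding of a point of the closed set f \<alpha> cl W(\<tau> \<epsilon>)
   has its N-th closed cell inside f W(\<sigma> \<epsilon>), with N independent of the coding. This uniformity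
   is a compactness argument on the finite graph of Q': if it failed, Koenig's lemma would give a
   limit path agreeing with bad paths on arbitrarily long prefixes, whose coded point lies in the
   closed set and so has a cell inside the open set. *)

lemma koenig_limit_sequence:
  fixes s :: "nat \<Rightarrow> nat \<Rightarrow> 'e"
  assumes "finite A" and "\<And>N i. s N i \<in> A"
  shows "\<exists>e. \<forall>k. infinite {N. \<forall>i<k. s N i = e i}"
proof -
  have extend: "\<exists>y. infinite {N. \<forall>i<Suc k. s N i = y i} \<and> (\<forall>i<k. y i = x i)"
    if inf: "infinite {N. \<forall>i<k. s N i = x i}" for k x
  proof -
    let ?S = "{N. \<forall>i<k. s N i = x i}"
    have "finite ((\<lambda>N. s N k) ` ?S)"
      using assms by (meson finite_subset image_subsetI)
    then obtain N0 where "infinite {N \<in> ?S. s N k = s N0 k}"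
      using pigeonhole_infinite[OF inf] by blast
    moreover have "{N \<in> ?S. s N k = s N0 k} = {N. \<forall>i<Suc k. s N i = (x(k := s N0 k)) i}"
      by (auto simp: less_Suc_eq)
    ultimately show ?thesis
      by (intro exI[of _ "x(k := s N0 k)"]) auto
  qed
  obtain f where f: "\<And>k. infinite {N. \<forall>i<k. s N i = f k i}"
    and f_ext: "\<And>k i. i < k \<Longrightarrow> f (Suc k) i = f k i"
    using dependent_nat_choice[of "\<lambda>k x. infinite {N. \<forall>i<k. s N i = x i}"
        "\<lambda>k x y. \<forall>i<k. y i = x i"] extend by (auto intro: that)
  have f_stable: "f k i = f (Suc i) i" if "Suc i \<le> k" for i k
    using that by (induction k rule: dec_induct) (auto simp: f_ext)
  define e where "e i = f (Suc i) i" for i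
  have "\<forall>i<k. f k i = e i" for k
    unfolding e_def by (auto intro: f_stable)
  then have "{N. \<forall>i<k. s N i = f k i} = {N. \<forall>i<k. s N i = e i}" for k
    by auto
  then show ?thesis
    using f by auto
qed

lemma labprod_prefix: "(\<And>i. i < k \<Longrightarrow> e i = e' i) \<Longrightarrow> labprod G e k = labprod G e' k"
  by (induction k) auto

lemma tvert_shift: "k \<ge> 1 \<Longrightarrow> tvert (\<lambda>i. e (n + i)) k = tvert e (n + k)"
  by (simp add: tvert_def)

lemma edge_path_shift: "edge_path E e \<Longrightarrow> edge_path E (\<lambda>i. e (n + i))"
  by (simp add: edge_path_def)

lemma edge_path_esrc:
  assumes "edge_path E e" and "k \<ge> 1"
  shows "esrc (e k) = tvert e k"
proof -
  have "k = Suc (k - 1)" using assms(2) by simp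
  then show ?thesis using assms(1) unfolding edge_path_def tvert_def by metis
qed

lemma nbhd_basis_mem: "nbhd_basis p B \<Longrightarrow> k \<ge> 1 \<Longrightarrow> p \<in> B k"
  unfolding nbhd_basis_def using interior_subset by blast

locale homeo_act =
  fixes G :: "('g, 'b) monoid_scheme" (structure) and act :: "'g \<Rightarrow> 'm::t2_space \<Rightarrow> 'm"
  assumes homeo_action: "homeo_action G act"
begin

sublocale group G
  using homeo_action by (simp add: homeo_action_def)

lemma act_mult: "a \<in> carrier G \<Longrightarrow> b \<in> carrier G \<Longrightarrow> act (a \<otimes> b) x = act a (act b x)"
  using homeo_action by (simp add: homeo_action_def)

lemma image_act_mult: "a \<in> carrier G \<Longrightarrow> b \<in> carrier G \<Longrightarrow> act (a \<otimes> b) ` S = act a ` act b ` S"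
  by (simp add: act_mult image_image)

lemma act_one: "act \<one> x = x"
  using homeo_action by (simp add: homeo_action_def)

lemma act_inv_act: "a \<in> carrier G \<Longrightarrow> act (inv a) (act a x) = x"
  by (simp flip: act_mult add: act_one)

lemma open_image_act: "a \<in> carrier G \<Longrightarrow> open S \<Longrightarrow> open (act a ` S)"
  using homeo_action homeomorphism_imp_open_map[of UNIV UNIV "act a" "act (inv a)" S]
  by (simp add: homeo_action_def)

lemma closed_image_act: "a \<in> carrier G \<Longrightarrow> closed S \<Longrightarrow> closed (act a ` S)"
  using homeo_action homeomorphism_imp_closed_map[of UNIV UNIV "act a" "act (inv a)" S]
  by (simp add: homeo_action_def)

lemma labprod_carrier: "(\<And>i. elab (e i) \<in> carrier G) \<Longrightarrow> labprod G e k \<in> carrier G"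
  by (induction k) auto

lemma labprod_add:
  assumes "\<And>i. elab (e i) \<in> carrier G"
  shows "labprod G e (n + k) = labprod G e n \<otimes> labprod G (\<lambda>i. e (n + i)) k"
proof (induction k)
  case 0
  show ?case using labprod_carrier[OF assms] by simp
next
  case (Suc k)
  have "labprod G (\<lambda>i. e (n + i)) k \<in> carrier G"
    using assms by (intro labprod_carrier)
  with Suc show ?case
    using labprod_carrier[OF assms] assms by (simp add: m_assoc)
qed

end

locale coder = homeo_act G act
  for G :: "('g, 'b) monoid_scheme" (structure) and act :: "'g \<Rightarrow> 'm::t2_space \<Rightarrow> 'm" +
  fixes V :: "'v set" and E :: "('v \<times> 'g \<times> 'v) set" and W :: "'v \<Rightarrow> 'm set"
  assumes point_coder: "point_coder G act V E W"
begin

abbreviation cell :: "(nat \<Rightarrow> 'v \<times> 'g \<times> 'v) \<Rightarrow> nat \<Rightarrow> 'm set"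
  where "cell e k \<equiv> act (labprod G e k) ` W (tvert e k)"

abbreviation closed_cell :: "(nat \<Rightarrow> 'v \<times> 'g \<times> 'v) \<Rightarrow> nat \<Rightarrow> 'm set"
  where "closed_cell e k \<equiv> act (labprod G e k) ` closure (W (tvert e k))"

lemma finite_edges: "finite E"
  using point_coder by (simp add: point_coder_def)

lemma open_source_set: "ed \<in> E \<Longrightarrow> open (W (esrc ed))"
  using point_coder by (auto simp: point_coder_def esrc_def)

lemma edge_label_carrier: "ed \<in> E \<Longrightarrow> elab ed \<in> carrier G"
  using point_coder by (auto simp: point_coder_def elab_def)

lemma edge_image_subset: "ed \<in> E \<Longrightarrow> act (elab ed) ` closure (W (etgt ed)) \<subseteq> W (esrc ed)"
  using point_coder by (simp add: point_coder_def)

lemma closed_edge_image: "ed \<in> E \<Longrightarrow> closed (act (elab ed) ` closure (W (etgt ed)))"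
  by (simp add: closed_image_act edge_label_carrier)

lemma edge_path_label_carrier: "edge_path E e \<Longrightarrow> elab (e i) \<in> carrier G"
  by (simp add: edge_path_def edge_label_carrier)

lemma edge_path_labprod_carrier: "edge_path E e \<Longrightarrow> labprod G e k \<in> carrier G"
  by (simp add: edge_path_label_carrier labprod_carrier)

lemma strict_coding_ex: "edge_path E e \<Longrightarrow> \<exists>p. strict_coding G act E W e p"
  using point_coder by (simp add: point_coder_def strict_coding_def)

lemma closed_cell_Suc_subset_cell:
  assumes "edge_path E e" and "k \<ge> 1"
  shows "closed_cell e (Suc k) \<subseteq> cell e k"
proof -
  have ek: "e k \<in> E" using assms(1) by (simp add: edge_path_def)
  have "closed_cell e (Suc k) = act (labprod G e k) ` act (elab (e k)) ` closure (W (etgt (e k)))"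
    using assms(1) by (simp add: tvert_def image_act_mult edge_path_labprod_carrier edge_path_label_carrier)
  also have "\<dots> \<subseteq> act (labprod G e k) ` W (esrc (e k))"
    using edge_image_subset[OF ek] by (rule image_mono)
  finally show ?thesis
    using edge_path_esrc[OF assms] by simp
qed

lemma closed_cell_antimono:
  assumes "edge_path E e" and "1 \<le> j" and "j \<le> k"
  shows "closed_cell e k \<subseteq> closed_cell e j"
  using assms(3)
proof (induction k rule: dec_induct)
  case (step k)
  have "closed_cell e (Suc k) \<subseteq> cell e k"
    using closed_cell_Suc_subset_cell assms(1,2) step(1) by simp
  also have "\<dots> \<subseteq> closed_cell e k"
    by (intro image_mono closure_subset)
  finally show ?case using step(3) by blast
qed simp

lemma cell_antimono:
  assumes "edge_path E e" and "1 \<le> j" and "j \<le> k"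
  shows "cell e k \<subseteq> cell e j"
proof (cases "j = k")
  case False
  have "cell e k \<subseteq> closed_cell e k"
    by (intro image_mono closure_subset)
  also have "\<dots> \<subseteq> closed_cell e (Suc j)"
    using closed_cell_antimono[OF assms(1), of "Suc j" k] assms False by linarith
  also have "\<dots> \<subseteq> cell e j"
    using closed_cell_Suc_subset_cell assms by simp
  finally show ?thesis .
qed simp

lemma labprod_image_shift:
  assumes "edge_path E e" and "j \<ge> 1"
  shows "act (labprod G e (n + j)) ` S (tvert e (n + j))
    = act (labprod G e n) ` act (labprod G (\<lambda>i. e (n + i)) j) ` S (tvert (\<lambda>i. e (n + i)) j)"
  using assms edge_path_shift[OF assms(1)]
  by (simp add: labprod_add edge_path_label_carrier edge_path_labprod_carrier image_act_mult tvert_shift)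

lemma pathseq_image_shift:
  assumes "edge_path E e" and "g0 \<in> carrier G" and "j \<ge> 1"
  shows "act (pathseq G g0 e (n + j)) ` S (tvert e (n + j))
    = act (pathseq G g0 e n) ` act (labprod G (\<lambda>i. e (n + i)) j) ` S (tvert (\<lambda>i. e (n + i)) j)"
  using assms labprod_image_shift[OF assms(1,3)] edge_path_labprod_carrier[OF assms(1)]
  by (simp add: pathseq_def image_act_mult)

lemma strict_coding_shift:
  assumes "strict_coding G act E W e p"
  shows "\<exists>q. strict_coding G act E W (\<lambda>i. e (n + i)) q \<and> act (labprod G e n) q = p"
proof -
  have e: "edge_path E e" and p: "nbhd_basis p (cell e)"
    using assms by (simp_all add: strict_coding_def)
  obtain q where q: "strict_coding G act E W (\<lambda>i. e (n + i)) q"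
    using strict_coding_ex[OF edge_path_shift[OF e]] by blast
  have "act (labprod G e n) q = p"
  proof (rule ccontr)
    assume "act (labprod G e n) q \<noteq> p"
    then obtain U where U: "open U" "p \<in> U" "act (labprod G e n) q \<notin> U"
      using t1_space by metis
    then obtain j where j: "j \<ge> 1" "cell e j \<subseteq> U"
      using p by (auto simp: nbhd_basis_def)
    have "q \<in> cell (\<lambda>i. e (n + i)) j"
      using q nbhd_basis_mem[of q "cell (\<lambda>i. e (n + i))" j] j(1) by (simp add: strict_coding_def)
    then have "act (labprod G e n) q \<in> cell e (n + j)"
      using labprod_image_shift[OF e j(1), of n W] by blast
    also have "\<dots> \<subseteq> cell e j"
      using cell_antimono[OF e j(1)] by simp
    finally show False using j(2) U(3) by blast
  qed
  with q show ?thesis by blast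
qed

lemma gen_coding_edge_path: "gen_coding G act E W g0 e p \<Longrightarrow> edge_path E e"
  by (auto simp: gen_coding_def strict_coding_def)

lemma pathseq_carrier: "gen_coding G act E W g0 e p \<Longrightarrow> pathseq G g0 e k \<in> carrier G"
  using gen_coding_edge_path edge_path_labprod_carrier by (simp add: gen_coding_def pathseq_def)

lemma gen_coding_shift:
  assumes "gen_coding G act E W g0 e p"
  shows "\<exists>q. strict_coding G act E W (\<lambda>i. e (n + i)) q \<and> p = act (pathseq G g0 e n) q"
proof -
  obtain p0 where g0: "g0 \<in> carrier G" and p0: "strict_coding G act E W e p0" and p: "p = act g0 p0"
    using assms by (auto simp: gen_coding_def)
  obtain q where q: "strict_coding G act E W (\<lambda>i. e (n + i)) q" "act (labprod G e n) q = p0"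
    using strict_coding_shift[OF p0] by blast
  have "labprod G e n \<in> carrier G"
    using gen_coding_edge_path[OF assms] by (rule edge_path_labprod_carrier)
  with g0 p q show ?thesis
    by (auto simp: pathseq_def act_mult)
qed

lemma strict_coding_first_edge:
  assumes "strict_coding G act E W e r"
  shows "r \<in> act (elab (e 0)) ` W (etgt (e 0))"
proof -
  have "r \<in> cell e 1"
    using assms nbhd_basis_mem[of r "cell e" 1] by (simp add: strict_coding_def)
  moreover have "elab (e 0) \<in> carrier G"
    using assms by (simp add: strict_coding_def edge_path_label_carrier)
  ultimately show ?thesis by (simp add: tvert_def)
qed

lemma eventually_closed_cell_subset:
  assumes "closed C" and "open U" and "C \<subseteq> U"
  shows "\<forall>\<^sub>F n in sequentially. \<forall>e q. strict_coding G act E W e q \<longrightarrow> q \<in> C \<longrightarrow> closed_cell e n \<subseteq> U"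
proof (rule ccontr)
  assume "\<not> ?thesis"
  then have "\<forall>N. \<exists>n e q. N \<le> n \<and> strict_coding G act E W e q \<and> q \<in> C \<and> \<not> closed_cell e n \<subseteq> U"
    by (auto simp: eventually_sequentially)
  then obtain n s qs where n: "\<And>N. N \<le> n N"
    and s: "\<And>N. strict_coding G act E W (s N) (qs N)" and qs: "\<And>N. qs N \<in> C"
    and bad: "\<And>N. \<not> closed_cell (s N) (n N) \<subseteq> U"
    by metis
  have "\<And>N i. s N i \<in> E"
    using s by (simp add: strict_coding_def edge_path_def)
  then obtain e where "\<And>k. infinite {N. \<forall>i<k. s N i = e i}"
    using koenig_limit_sequence[OF finite_edges] by blast
  then have agree: "\<exists>N\<ge>m. \<forall>i<k. s N i = e i" for k m
    by (simp add: infinite_nat_iff_unbounded_le)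
  have same_cells: "cell (s N) k = cell e k" "closed_cell (s N) k = closed_cell e k"
    if "\<forall>i<k. s N i = e i" "k \<ge> 1" for N k
    using that labprod_prefix[of k "s N" e G] by (simp_all add: tvert_def)
  have "e i \<in> E \<and> etgt (e i) = esrc (e (Suc i))" for i
  proof -
    obtain N where "\<forall>i'<Suc (Suc i). s N i' = e i'"
      using agree by blast
    then have "s N i = e i" "s N (Suc i) = e (Suc i)" by auto
    then show ?thesis
      using s[of N] by (metis strict_coding_def edge_path_def)
  qed
  then have e: "edge_path E e"
    by (simp add: edge_path_def)
  obtain q where q: "nbhd_basis q (cell e)"
    using strict_coding_ex[OF e] by (auto simp: strict_coding_def)
  have "q \<in> C"
  proof (rule ccontr)
    assume "q \<notin> C"
    then obtain k where k: "k \<ge> 1" "cell e k \<subseteq> - C"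
      using q assms(1) by (auto simp: nbhd_basis_def)
    obtain N where N: "\<forall>i<k. s N i = e i"
      using agree by blast
    have "qs N \<in> cell (s N) k"
      using s[of N] nbhd_basis_mem[of "qs N" "cell (s N)" k] k(1) by (simp add: strict_coding_def)
    then show False
      using same_cells(1)[OF N k(1)] k(2) qs[of N] by auto
  qed
  then obtain k where k: "k \<ge> 1" "cell e k \<subseteq> U"
    using q assms(2,3) by (auto simp: nbhd_basis_def)
  obtain N where N: "N \<ge> Suc k" "\<forall>i<Suc k. s N i = e i"
    using agree by blast
  have "closed_cell (s N) (n N) \<subseteq> closed_cell (s N) (Suc k)"
    using closed_cell_antimono[of "s N" "Suc k" "n N"] s[of N] N(1) n[of N]
    by (simp add: strict_coding_def del: labprod.simps)
  also have "\<dots> = closed_cell e (Suc k)"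
    using same_cells(2)[OF N(2)] by simp
  also have "\<dots> \<subseteq> cell e k"
    using closed_cell_Suc_subset_cell[OF e k(1)] .
  finally show False
    using k(2) bad[of N] by blast
qed

end

locale coder_pair = Q: coder G act V E W + Q': coder G act V' E' W'
  for G :: "('g, 'b) monoid_scheme" (structure) and act :: "'g \<Rightarrow> 'm::t2_space \<Rightarrow> 'm"
    and V :: "'v set" and E :: "('v \<times> 'g \<times> 'v) set" and W :: "'v \<Rightarrow> 'm set"
    and V' :: "'u set" and E' :: "('u \<times> 'g \<times> 'u) set" and W' :: "'u \<Rightarrow> 'm set"
begin

lemma uniform_depth:
  assumes "finite F" and "F \<subseteq> carrier G"
  shows "\<exists>N\<ge>1. \<forall>f\<in>F. \<forall>ed\<in>E. \<forall>e q. strict_coding G act E' W' e q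
      \<longrightarrow> q \<in> act f ` act (elab ed) ` closure (W (etgt ed))
      \<longrightarrow> Q'.closed_cell e N \<subseteq> act f ` W (esrc ed)"
proof -
  have "\<forall>\<^sub>F N in sequentially. \<forall>e q. strict_coding G act E' W' e q
      \<longrightarrow> q \<in> act f ` act (elab ed) ` closure (W (etgt ed))
      \<longrightarrow> Q'.closed_cell e N \<subseteq> act f ` W (esrc ed)"
    if "f \<in> F" "ed \<in> E" for f ed
  proof (rule Q'.eventually_closed_cell_subset)
    have f: "f \<in> carrier G" using that(1) assms(2) by blast
    show "closed (act f ` act (elab ed) ` closure (W (etgt ed)))"
      using f that(2) by (simp add: Q.closed_image_act Q.closed_edge_image)
    show "open (act f ` W (esrc ed))"
      using f that(2) by (simp add: Q.open_image_act Q.open_source_set)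
    show "act f ` act (elab ed) ` closure (W (etgt ed)) \<subseteq> act f ` W (esrc ed)"
      using that(2) by (intro image_mono Q.edge_image_subset)
  qed
  then have "\<forall>\<^sub>F N in sequentially. N \<ge> 1 \<and> (\<forall>f\<in>F. \<forall>ed\<in>E. \<forall>e q. strict_coding G act E' W' e q
      \<longrightarrow> q \<in> act f ` act (elab ed) ` closure (W (etgt ed))
      \<longrightarrow> Q'.closed_cell e N \<subseteq> act f ` W (esrc ed))"
    using assms(1) Q.finite_edges
    by (auto intro!: eventually_conj eventually_ge_at_top eventually_ball_finite)
  then show ?thesis
    by (auto simp: eventually_sequentially)
qed

lemma closed_cell_subset_cell:
  assumes c: "gen_coding G act E' W' g0 c p" and d: "gen_coding G act E W h0 d p"
    and "m \<ge> 1" and "N \<ge> 1"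
    and f: "f = inv (pathseq G g0 c n) \<otimes> pathseq G h0 d m"
    and depth: "\<forall>e q. strict_coding G act E' W' e q
      \<longrightarrow> q \<in> act f ` act (elab (d m)) ` closure (W (etgt (d m)))
      \<longrightarrow> Q'.closed_cell e N \<subseteq> act f ` W (esrc (d m))"
  shows "act (pathseq G g0 c (n + N)) ` closure (W' (tvert c (n + N)))
    \<subseteq> act (pathseq G h0 d m) ` W (tvert d m)"
proof -
  let ?g = "pathseq G g0 c n" and ?h = "pathseq G h0 d m"
  obtain q where q: "strict_coding G act E' W' (\<lambda>i. c (n + i)) q" "p = act ?g q"
    using Q'.gen_coding_shift[OF c] by blast
  obtain r where r: "strict_coding G act E W (\<lambda>i. d (m + i)) r" "p = act ?h r"
    using Q.gen_coding_shift[OF d] by blast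
  have g: "?g \<in> carrier G" and h: "?h \<in> carrier G"
    using Q'.pathseq_carrier[OF c] Q.pathseq_carrier[OF d] by blast+
  have "q = act f r"
    using q(2) g h by (simp add: f Q.act_mult Q.act_inv_act flip: r(2))
  moreover have "r \<in> act (elab (d m)) ` closure (W (etgt (d m)))"
    using Q.strict_coding_first_edge[OF r(1)] closure_subset by auto
  ultimately have "Q'.closed_cell (\<lambda>i. c (n + i)) N \<subseteq> act f ` W (esrc (d m))"
    using depth q(1) by blast
  then have "act ?g ` Q'.closed_cell (\<lambda>i. c (n + i)) N \<subseteq> act ?g ` act f ` W (esrc (d m))"
    by (rule image_mono)
  moreover have "act (pathseq G g0 c (n + N)) ` closure (W' (tvert c (n + N)))
      = act ?g ` Q'.closed_cell (\<lambda>i. c (n + i)) N"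
    using Q'.pathseq_image_shift[OF Q'.gen_coding_edge_path[OF c] _ \<open>N \<ge> 1\<close>,
        of g0 n "\<lambda>v. closure (W' v)"] c
    by (simp add: gen_coding_def)
  moreover have "?g \<otimes> f = ?h"
    using g h by (simp add: f Q.m_assoc[symmetric])
  then have "act ?g ` act f ` W (esrc (d m)) = act ?h ` W (tvert d m)"
    using g h edge_path_esrc[OF Q.gen_coding_edge_path[OF d] \<open>m \<ge> 1\<close>]
    by (simp add: f Q.image_act_mult[symmetric])
  ultimately show ?thesis
    by simp
qed

end

theorem lemmaA1:
  fixes G :: "('g, 'b) monoid_scheme"
    and act :: "'g \<Rightarrow> 'm::t2_space \<Rightarrow> 'm"
    and F :: "'g set"
    and V :: "'v set" and E :: "('v \<times> 'g \<times> 'v) set" and W :: "'v \<Rightarrow> 'm set"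
    and V' :: "'u set" and E' :: "('u \<times> 'g \<times> 'u) set" and W' :: "'u \<Rightarrow> 'm set"
  assumes "homeo_action G act"
    and "finite F" and "F \<subseteq> carrier G"
    and "point_coder G act V E W"
    and "point_coder G act V' E' W'"
  shows "\<exists>N::nat. \<forall>g0 c h0 d p.
           gen_coding G act E' W' g0 c p \<and> gen_coding G act E W h0 d p \<longrightarrow>
           (\<forall>m n. m \<ge> 1 \<and> n \<ge> 1 \<and>
               inv\<^bsub>G\<^esub> (pathseq G g0 c n) \<otimes>\<^bsub>G\<^esub> pathseq G h0 d m \<in> F \<longrightarrow>
               act (pathseq G g0 c (n + N)) ` closure (W' (tvert c (n + N)))
                 \<subseteq> act (pathseq G h0 d m) ` W (tvert d m))"
proof -
  interpret coder_pair G act V E W V' E' W'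
    using assms(1,4,5) by (simp add: coder_pair_def coder_def coder_axioms_def homeo_act_def)
  obtain N where "N \<ge> 1" and depth: "\<forall>f\<in>F. \<forall>ed\<in>E. \<forall>e q. strict_coding G act E' W' e q
      \<longrightarrow> q \<in> act f ` act (elab ed) ` closure (W (etgt ed))
      \<longrightarrow> Q'.closed_cell e N \<subseteq> act f ` W (esrc ed)"
    using uniform_depth[OF assms(2,3)] by blast
  show ?thesis
  proof (intro exI allI impI)
    fix g0 c h0 d p m n
    assume codings: "gen_coding G act E' W' g0 c p \<and> gen_coding G act E W h0 d p"
      and mn: "m \<ge> 1 \<and> n \<ge> 1 \<and> inv\<^bsub>G\<^esub> (pathseq G g0 c n) \<otimes>\<^bsub>G\<^esub> pathseq G h0 d m \<in> F"
    have "d m \<in> E"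
      using Q.gen_coding_edge_path codings by (auto simp: edge_path_def)
    then show "act (pathseq G g0 c (n + N)) ` closure (W' (tvert c (n + N)))
        \<subseteq> act (pathseq G h0 d m) ` W (tvert d m)"
      using closed_cell_subset_cell[OF _ _ _ \<open>N \<ge> 1\<close> refl] bspec[OF depth] codings mn
      by blast
  qed
qed

end
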